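(* Let $4 \le r \le n-1$ and let $m \in \{r,r-1,r-2\}$. If $m<n-1$, then \[\sum_{j=0}^{r-1} \binom{m}{j} \binom{n-m-1}{r-j-1} 2^{r-j-1} > 1 + \binom{n-1}{r-1}.\] If $m=n-1$, then \[\sum_{j=0}^{r-1} \binom{m}{j} \binom{n-m-1}{r-j-1} 2^{r-j-1} = \binom{n-1}{r-1}.\]
   Context: Binomial coefficients $\binom{a}{b}$ are $0$ when $b<0$ or $b>a$. *)

theory Defs
  imports Main
begin

end

theory Submission
  imports Defs
begin

text \<open>Write \<open>s = r - 1\<close> and \<open>k = n - m - 1\<close>. Dropping the weights \<open>2 ^ (s - j)\<close>
  turns the sum into the Vandermonde sum \<open>(m + k) choose s\<close>. If \<open>k = 0\<close> only the
  term \<open>j = s\<close>, of weight 1, survives, giving equality. Otherwise the term \<open>j = s - 1\<close>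
  has weight 2, so the sum exceeds the Vandermonde sum by at least
  \<open>(m choose (s - 1)) * k\<close>, which is at least 2 for the three admissible values of \<open>m\<close>:
  for \<open>m \<ge> r - 1\<close> the binomial coefficient is at least 2, and for \<open>m = r - 2\<close> the
  hypothesis \<open>r \<le> n - 1\<close> gives \<open>k \<ge> 2\<close>.\<close>

lemma two_le_choose:
  fixes m j :: nat
  assumes "0 < j" and "j < m"
  shows "2 \<le> m choose j"
proof -
  obtain m' j' where m': "m = Suc m'" and j': "j = Suc j'"
    using assms by (metis gr0_implies_Suc less_imp_Suc_add)
  have "m choose j = (m' choose j') + (m' choose j)"
    by (simp add: m' j')
  moreover have "1 \<le> m' choose j'" and "1 \<le> m' choose j"
    using assms by (simp_all add: m' j' Suc_le_eq)
  ultimately show ?thesis by linarith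
qed

lemma vandermonde_pow2_weighted_ge:
  fixes m k s :: nat
  assumes "1 \<le> s"
  shows "((m + k) choose s) + (m choose (s - 1)) * k
           \<le> (\<Sum>j\<le>s. (m choose j) * (k choose (s - j)) * 2 ^ (s - j))"
proof -
  define a where "a j = (m choose j) * (k choose (s - j))" for j
  have mem: "s - 1 \<in> {..s}" by simp
  have "(\<Sum>j\<le>s. a j) = (m + k) choose s"
    unfolding a_def by (rule vandermonde)
  moreover have "a (s - 1) = (m choose (s - 1)) * k"
    using assms by (simp add: a_def)
  ultimately have "((m + k) choose s) + (m choose (s - 1)) * k = (\<Sum>j\<le>s. a j) + a (s - 1)"
    by simp
  also have "\<dots> = (\<Sum>j\<le>s. a j + (if j = s - 1 then a j else 0))"
    by (simp add: sum.distrib mem)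
  also have "\<dots> \<le> (\<Sum>j\<le>s. a j * 2 ^ (s - j))"
  proof (rule sum_mono)
    fix j
    show "a j + (if j = s - 1 then a j else 0) \<le> a j * 2 ^ (s - j)"
    proof (cases "j = s - 1")
      case True
      then show ?thesis using assms by simp
    next
      case False
      have "a j * 1 \<le> a j * 2 ^ (s - j)" by (intro mult_le_mono2) simp
      then show ?thesis using False by simp
    qed
  qed
  finally show ?thesis by (simp add: a_def)
qed

lemma vandermonde_pow2_weighted_gt:
  fixes m k s :: nat
  assumes "2 \<le> s" and "s - 1 \<le> m" and "1 \<le> k" and "m = s - 1 \<Longrightarrow> 2 \<le> k"
  shows "1 + ((m + k) choose s) < (\<Sum>j\<le>s. (m choose j) * (k choose (s - j)) * 2 ^ (s - j))"
proof -
  have "2 \<le> (m choose (s - 1)) * k"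
  proof (cases "m = s - 1")
    case True
    then show ?thesis using assms(4) by simp
  next
    case False
    then have "2 \<le> m choose (s - 1)"
      using assms(1,2) by (intro two_le_choose) auto
    then show ?thesis using assms(3) mult_le_mono by fastforce
  qed
  moreover have "((m + k) choose s) + (m choose (s - 1)) * k
                   \<le> (\<Sum>j\<le>s. (m choose j) * (k choose (s - j)) * 2 ^ (s - j))"
    using assms(1) by (intro vandermonde_pow2_weighted_ge) simp
  ultimately show ?thesis by linarith
qed

lemma vandermonde_pow2_weighted_zero:
  fixes m s :: nat
  shows "(\<Sum>j\<le>s. (m choose j) * (0 choose (s - j)) * 2 ^ (s - j)) = m choose s"
proof -
  have "(\<Sum>j\<le>s. (m choose j) * (0 choose (s - j)) * 2 ^ (s - j))
          = (\<Sum>j\<le>s. if j = s then m choose j else 0)"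
    by (rule sum.cong) auto
  then show ?thesis by simp
qed

theorem lemma9p2:
  fixes n r m :: nat
  assumes "4 \<le> r" and "r \<le> n - 1" and "m \<in> {r, r - 1, r - 2}"
  shows "(m < n - 1 \<longrightarrow>
            (\<Sum>j = 0..r - 1. (m choose j) * ((n - m - 1) choose (r - j - 1)) * 2 ^ (r - j - 1))
              > 1 + ((n - 1) choose (r - 1)))
       \<and> (m = n - 1 \<longrightarrow>
            (\<Sum>j = 0..r - 1. (m choose j) * ((n - m - 1) choose (r - j - 1)) * 2 ^ (r - j - 1))
              = (n - 1) choose (r - 1))"
proof -
  define s where "s = r - 1"
  define k where "k = n - m - 1"
  have sum_eq: "(\<Sum>j = 0..r - 1. (m choose j) * ((n - m - 1) choose (r - j - 1)) * 2 ^ (r - j - 1))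
      = (\<Sum>j\<le>s. (m choose j) * (k choose (s - j)) * 2 ^ (s - j))"
    by (simp add: s_def k_def atLeast0AtMost diff_diff_left add.commute)
  have "1 + ((n - 1) choose s)
          < (\<Sum>j\<le>s. (m choose j) * (k choose (s - j)) * 2 ^ (s - j))" if "m < n - 1"
  proof -
    have "m + k = n - 1" using that by (simp add: k_def)
    moreover have "1 + ((m + k) choose s)
                     < (\<Sum>j\<le>s. (m choose j) * (k choose (s - j)) * 2 ^ (s - j))"
    proof (rule vandermonde_pow2_weighted_gt)
      show "2 \<le> s" and "s - 1 \<le> m" using assms by (auto simp: s_def)
      show "1 \<le> k" using that by (simp add: k_def)
      show "2 \<le> k" if "m = s - 1" using assms \<open>m = s - 1\<close> by (simp add: s_def k_def)
    qed
    ultimately show ?thesis by simp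
  qed
  moreover have "(\<Sum>j\<le>s. (m choose j) * (k choose (s - j)) * 2 ^ (s - j))
                   = (n - 1) choose s" if "m = n - 1"
    using that vandermonde_pow2_weighted_zero[of m s] by (simp add: k_def)
  ultimately show ?thesis
    unfolding sum_eq unfolding s_def[symmetric] by blast
qed

end
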